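(* Fix a horizon $T\ge 1$, $N\ge 1$ net-capacity-surplus profiles $(P_t(k))_{t=1}^T$, $k=1,\dots,N$, and an initial state of charge $S_0\ge 0$. For parameters $\overline{S}\ge S_0$ (energy capacity) and $\overline{x}\ge 0$ (power capacity), let $v_k(\overline{S},\overline{x})$ be the optimal value of problem (P1) for profile $k$, and $$\mathrm{EUE}(\overline{S},\overline{x})=\frac1N\sum_{k=1}^N\Big(\sum_{t=1}^T p_t^-(k)+v_k(\overline{S},\overline{x})\Big).$$ Then (P1) is feasible for every such parameter pair. Moreover, if the qualified capacity is taken to be $\overline{S}$, or $\overline{x}$, or more generally if the parameters move along a ray $(\overline{S},\overline{x})=(\overline{S}^0+a\theta,\ \overline{x}^0+b\theta)$, $\theta\ge 0$, with fixed $a,b\ge 0$, $(a,b)\neq(0,0)$, then $\mathrm{EUE}$, viewed as a function of this single parameter, has the following properties: (i) it is continuous and piecewise linear (with finitely many pieces); (ii) it is non-increasing, so the marginal reliability impact $\mathrm{MRI}=-\partial\,\mathrm{EUE}/\partial\,\mathrm{QC}$ is non-negative wherever it exists, and both one-sided derivatives of $\mathrm{EUE}$ are $\le 0$ everywhere. This holds regardless of the profiles $P_t(k)$.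
   Context: For a real number $P_t$ (the net capacity surplus at hour $t$: total available non-storage capacity minus demand), define the net power surplus $p_t^+=\max\{P_t,0\}$ and deficiency $p_t^-=\max\{-P_t,0\}$; thus $p_t^\pm\ge 0$ and $p_t^+p_t^-=0$. For one profile, problem (P1) (single storage under reliability dispatch) is $$\min_{S_1,\dots,S_T}\ \sum_{t=1}^T\min\{0,\,S_t-S_{t-1}\}$$ subject to, for all $t=1,\dots,T$ (with $S_0$ the given constant): $0\le S_t\le \overline{S}$ (multipliers $\lambda_{1t},\lambda_{2t}\ge0$), $-\overline{x}\le S_t-S_{t-1}\le \overline{x}$ (multipliers $\lambda_{3t}$ for the lower, $\lambda_{4t}$ for the upper bound), $-p_t^-\le S_t-S_{t-1}\le p_t^+$ (multipliers $\lambda_{5t},\lambda_{6t}$). Here $S_t$ is the state of charge at the end of hour $t$. The unserved energy of the profile is $\sum_t p_t^-+$ (optimal value), and EUE is the average over the $N$ equally likely profiles. *)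

theory Defs
  imports "HOL-Analysis.Analysis"
begin

definition psurplus :: "real \<Rightarrow> real" where
  "psurplus p = max p 0"

definition pdeficit :: "real \<Rightarrow> real" where
  "pdeficit p = max (- p) 0"

text \<open>S t is the state of charge at the end of hour t, S 0 = S0.\<close>
definition P1_feasible ::
  "nat \<Rightarrow> (nat \<Rightarrow> real) \<Rightarrow> real \<Rightarrow> real \<Rightarrow> real \<Rightarrow> (nat \<Rightarrow> real) \<Rightarrow> bool" where
  "P1_feasible T P S0 Sbar xbar S \<longleftrightarrow>
     S 0 = S0 \<and>
     (\<forall>t\<in>{1..T}.
        0 \<le> S t \<and> S t \<le> Sbar \<and>
        - xbar \<le> S t - S (t - 1) \<and> S t - S (t - 1) \<le> xbar \<and>
        - pdeficit (P t) \<le> S t - S (t - 1) \<and> S t - S (t - 1) \<le> psurplus (P t))"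

definition P1_objective :: "nat \<Rightarrow> (nat \<Rightarrow> real) \<Rightarrow> real" where
  "P1_objective T S = (\<Sum>t=1..T. min 0 (S t - S (t - 1)))"

definition P1_value :: "nat \<Rightarrow> (nat \<Rightarrow> real) \<Rightarrow> real \<Rightarrow> real \<Rightarrow> real \<Rightarrow> real" where
  "P1_value T P S0 Sbar xbar =
     Inf {P1_objective T S | S. P1_feasible T P S0 Sbar xbar S}"

definition EUE ::
  "nat \<Rightarrow> nat \<Rightarrow> (nat \<Rightarrow> nat \<Rightarrow> real) \<Rightarrow> real \<Rightarrow> real \<Rightarrow> real \<Rightarrow> real" where
  "EUE T N P S0 Sbar xbar =
     (1 / real N) * (\<Sum>k=1..N. (\<Sum>t=1..T. pdeficit (P k t)) + P1_value T (P k) S0 Sbar xbar)"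

definition piecewise_linear_nonneg :: "(real \<Rightarrow> real) \<Rightarrow> bool" where
  "piecewise_linear_nonneg f \<longleftrightarrow>
     (\<exists>B. finite B \<and>
        (\<forall>u v. 0 \<le> u \<and> u < v \<and> B \<inter> {u<..<v} = {} \<longrightarrow>
           (\<exists>\<alpha> \<beta>. \<forall>\<theta>\<in>{u..v}. f \<theta> = \<alpha> * \<theta> + \<beta>)))"

end

theory Submission
  imports Defs
begin

text \<open>For a single profile, the greedy dispatch (store all available surplus, serve as much
  deficiency as possible, within the energy and power limits) is feasible and optimal for (P1):
  by induction over the hours it discharges at least as much as any feasible trajectory.
  Along the ray, its state of charge is obtained from affine functions of the parameter by
  finitely many sums, minima and maxima, so it is piecewise linear with finitely many
  breakpoints, and so are the optimal values and EUE.  Enlarging the parameters enlarges the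
  feasible set, so EUE is non-increasing; hence every linear piece has a non-positive slope,
  which gives the signs of the one-sided derivatives.  Continuity comes for free because the
  pieces are affine on closed intervals.\<close>

section \<open>Optimality of the greedy dispatch\<close>

lemma psurplus_nonneg: "0 \<le> psurplus p"
  and pdeficit_nonneg: "0 \<le> pdeficit p"
  by (simp_all add: psurplus_def pdeficit_def)

lemma psurplus_eq_0_or_pdeficit_eq_0: "psurplus p = 0 \<or> pdeficit p = 0"
  by (auto simp: psurplus_def pdeficit_def)

fun greedy_soc :: "(nat \<Rightarrow> real) \<Rightarrow> real \<Rightarrow> real \<Rightarrow> real \<Rightarrow> nat \<Rightarrow> real" where
  "greedy_soc p S0 Sb xb 0 = S0"
| "greedy_soc p S0 Sb xb (Suc t) = min Sb (max 0 (greedy_soc p S0 Sb xb t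
      + min xb (psurplus (p (Suc t))) - min xb (pdeficit (p (Suc t)))))"

lemma greedy_soc_bounds:
  assumes "0 \<le> S0" "S0 \<le> Sb"
  shows "0 \<le> greedy_soc p S0 Sb xb t" "greedy_soc p S0 Sb xb t \<le> Sb"
  using assms by (induction t) auto

lemma greedy_soc_feasible:
  assumes "0 \<le> S0" "S0 \<le> Sb" "0 \<le> xb"
  shows "P1_feasible T p S0 Sb xb (greedy_soc p S0 Sb xb)"
  unfolding P1_feasible_def
proof (intro conjI ballI)
  fix t assume "t \<in> {1..T}"
  then obtain s where t: "t = Suc s" by (cases t) auto
  show "0 \<le> greedy_soc p S0 Sb xb t" "greedy_soc p S0 Sb xb t \<le> Sb"
    by (rule greedy_soc_bounds[OF assms(1,2)])+
  show "- xb \<le> greedy_soc p S0 Sb xb t - greedy_soc p S0 Sb xb (t - 1)"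
       "greedy_soc p S0 Sb xb t - greedy_soc p S0 Sb xb (t - 1) \<le> xb"
       "- pdeficit (p t) \<le> greedy_soc p S0 Sb xb t - greedy_soc p S0 Sb xb (t - 1)"
       "greedy_soc p S0 Sb xb t - greedy_soc p S0 Sb xb (t - 1) \<le> psurplus (p t)"
    using greedy_soc_bounds[OF assms(1,2), of p xb s] psurplus_nonneg[of "p t"]
      pdeficit_nonneg[of "p t"] assms(3)
    unfolding t by (auto simp: min_def max_def)
qed simp

definition discharged :: "nat \<Rightarrow> (nat \<Rightarrow> real) \<Rightarrow> real" where
  "discharged t S = (\<Sum>s=1..t. max 0 (S (s - 1) - S s))"

lemma P1_objective_eq_discharged: "P1_objective T S = - discharged T S"
  unfolding P1_objective_def discharged_def sum_negf[symmetric]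
  by (rule sum.cong) (auto simp: min_def max_def)

lemma discharged_Suc: "discharged (Suc t) S = discharged t S + max 0 (S t - S (Suc t))"
  by (simp add: discharged_def)

text \<open>The second invariant says that the greedy trajectory has also taken in at least as much
  energy; it is what bounds the discharge of \<open>S\<close> in hours where the greedy trajectory runs
  empty.\<close>

lemma greedy_soc_dominates:
  assumes "0 \<le> S0" "S0 \<le> Sb" "0 \<le> xb" and feasible: "P1_feasible T p S0 Sb xb S"
    and "t \<le> T"
  shows "discharged t S \<le> discharged t (greedy_soc p S0 Sb xb)
    \<and> S t + discharged t S \<le> greedy_soc p S0 Sb xb t + discharged t (greedy_soc p S0 Sb xb)"
  using \<open>t \<le> T\<close>
proof (induction t)
  case 0
  then show ?case using feasible by (simp add: discharged_def P1_feasible_def)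
next
  case (Suc t)
  define g where "g = greedy_soc p S0 Sb xb"
  have IH: "discharged t S \<le> discharged t g" "S t + discharged t S \<le> g t + discharged t g"
    using Suc by (auto simp: g_def)
  have step: "0 \<le> S (Suc t)" "S (Suc t) \<le> Sb" "- xb \<le> S (Suc t) - S t" "S (Suc t) - S t \<le> xb"
    "- pdeficit (p (Suc t)) \<le> S (Suc t) - S t" "S (Suc t) - S t \<le> psurplus (p (Suc t))"
    using feasible Suc.prems unfolding P1_feasible_def by (auto dest!: bspec[of _ _ "Suc t"])
  have g: "0 \<le> g t" "g t \<le> Sb" "g (Suc t) = min Sb (max 0 (g t
      + min xb (psurplus (p (Suc t))) - min xb (pdeficit (p (Suc t)))))"
    using greedy_soc_bounds[OF assms(1,2)] by (simp_all add: g_def)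
  note nonneg = psurplus_nonneg[of "p (Suc t)"] pdeficit_nonneg[of "p (Suc t)"]
  from psurplus_eq_0_or_pdeficit_eq_0[of "p (Suc t)"]
  have "discharged (Suc t) S \<le> discharged (Suc t) g
    \<and> S (Suc t) + discharged (Suc t) S \<le> g (Suc t) + discharged (Suc t) g"
    unfolding discharged_Suc g(3)
    using IH step g(1,2) nonneg assms(3) by (elim disjE) (auto simp: min_def max_def)
  then show ?case by (simp add: g_def)
qed

lemma greedy_soc_optimal:
  assumes "0 \<le> S0" "S0 \<le> Sb" "0 \<le> xb" "P1_feasible T p S0 Sb xb S"
  shows "P1_objective T (greedy_soc p S0 Sb xb) \<le> P1_objective T S"
  using greedy_soc_dominates[OF assms order_refl] by (simp add: P1_objective_eq_discharged)

lemma P1_value_eq_greedy_soc: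
  assumes "0 \<le> S0" "S0 \<le> Sb" "0 \<le> xb"
  shows "P1_value T p S0 Sb xb = P1_objective T (greedy_soc p S0 Sb xb)"
  unfolding P1_value_def
  by (rule cInf_eq_minimum) (use greedy_soc_feasible[OF assms] greedy_soc_optimal[OF assms] in auto)

lemma P1_value_antimono:
  assumes "0 \<le> S0" "S0 \<le> Sb" "0 \<le> xb" "Sb \<le> Sb'" "xb \<le> xb'"
  shows "P1_value T p S0 Sb' xb' \<le> P1_value T p S0 Sb xb"
proof -
  have "P1_feasible T p S0 Sb' xb' (greedy_soc p S0 Sb xb)"
    using greedy_soc_feasible[OF assms(1-3), of T p] assms(4,5)
    unfolding P1_feasible_def by force
  then show ?thesis
    using greedy_soc_optimal[of S0 Sb' xb'] assms by (simp add: P1_value_eq_greedy_soc)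
qed

lemma EUE_antimono:
  assumes "0 \<le> S0" "S0 \<le> Sb" "0 \<le> xb" "Sb \<le> Sb'" "xb \<le> xb'"
  shows "EUE T N P S0 Sb' xb' \<le> EUE T N P S0 Sb xb"
  unfolding EUE_def
  by (intro mult_left_mono sum_mono add_left_mono P1_value_antimono) (use assms in auto)

section \<open>Piecewise linear functions on the half-line\<close>

definition affine_on :: "real set \<Rightarrow> (real \<Rightarrow> real) \<Rightarrow> bool" where
  "affine_on S f \<longleftrightarrow> (\<exists>\<alpha> \<beta>. \<forall>x\<in>S. f x = \<alpha> * x + \<beta>)"

lemma affine_on_eq: "affine_on S f \<Longrightarrow> (\<And>x. x \<in> S \<Longrightarrow> f x = g x) \<Longrightarrow> affine_on S g"
  by (simp add: affine_on_def)

lemma affine_on_linear: "affine_on S (\<lambda>x. \<alpha> * x)"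
  unfolding affine_on_def by (intro exI[of _ \<alpha>] exI[of _ 0]) simp

lemma affine_on_const: "affine_on S (\<lambda>x. c)"
  unfolding affine_on_def by (intro exI[of _ 0] exI[of _ c]) simp

lemma affine_on_add:
  assumes "affine_on S f" "affine_on S g"
  shows "affine_on S (\<lambda>x. f x + g x)"
proof -
  obtain \<alpha> \<beta> \<gamma> \<delta> where "\<forall>x\<in>S. f x = \<alpha> * x + \<beta>" "\<forall>x\<in>S. g x = \<gamma> * x + \<delta>"
    using assms by (auto simp: affine_on_def)
  then show ?thesis
    unfolding affine_on_def by (intro exI[of _ "\<alpha> + \<gamma>"] exI[of _ "\<beta> + \<delta>"]) (simp add: algebra_simps)
qed

lemma affine_on_cmult:
  assumes "affine_on S f"
  shows "affine_on S (\<lambda>x. c * f x)"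
proof -
  obtain \<alpha> \<beta> where "\<forall>x\<in>S. f x = \<alpha> * x + \<beta>"
    using assms by (auto simp: affine_on_def)
  then show ?thesis
    unfolding affine_on_def by (intro exI[of _ "c * \<alpha>"] exI[of _ "c * \<beta>"]) (simp add: algebra_simps)
qed

lemma affine_on_between:
  assumes "affine_on {u..v} f" "x \<in> {u..v}"
  shows "min (f u) (f v) \<le> f x \<and> f x \<le> max (f u) (f v)"
proof -
  obtain \<alpha> \<beta> where f: "\<forall>x\<in>{u..v}. f x = \<alpha> * x + \<beta>"
    using assms(1) by (auto simp: affine_on_def)
  have "\<alpha> * u \<le> \<alpha> * x \<and> \<alpha> * x \<le> \<alpha> * v \<or> \<alpha> * v \<le> \<alpha> * x \<and> \<alpha> * x \<le> \<alpha> * u"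
    using assms(2) by (cases "0 \<le> \<alpha>") (auto intro: mult_left_mono mult_left_mono_neg)
  then show ?thesis
    using f assms(2) by auto
qed

lemma affine_on_two_zeros:
  assumes "affine_on S f" "z1 \<in> S" "z2 \<in> S" "z1 \<noteq> z2" "f z1 = 0" "f z2 = 0" "x \<in> S"
  shows "f x = 0"
proof -
  obtain \<alpha> \<beta> where f: "\<forall>x\<in>S. f x = \<alpha> * x + \<beta>"
    using assms(1) by (auto simp: affine_on_def)
  then have "\<alpha> * (z1 - z2) = f z1 - f z2"
    using assms(2,3) by (simp add: algebra_simps)
  then have "\<alpha> = 0"
    using assms(4-6) by simp
  moreover from this have "\<beta> = 0"
    using f assms(2,5) by simp
  ultimately show ?thesis
    using f assms(7) by simp
qed

lemma affine_on_sign_change: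
  assumes "affine_on {u..v} f" "u \<le> v" "f u * f v < 0"
  shows "\<exists>z\<in>{u<..<v}. f z = 0 \<and> (\<forall>y\<in>{u..v}. f y = 0 \<longrightarrow> y = z)"
proof -
  obtain \<alpha> \<beta> where f: "\<forall>x\<in>{u..v}. f x = \<alpha> * x + \<beta>"
    using assms(1) by (auto simp: affine_on_def)
  have "\<alpha> \<noteq> 0"
    using f assms(2,3) by (auto simp: mult_less_0_iff)
  define z where "z = - \<beta> / \<alpha>"
  have "\<forall>x\<in>{u..v}. f x = \<alpha> * (x - z)"
    using f \<open>\<alpha> \<noteq> 0\<close> by (simp add: z_def algebra_simps)
  then have "f u = \<alpha> * (u - z)" "f v = \<alpha> * (v - z)"
    using assms(2) by auto
  then have "\<alpha> * \<alpha> * ((u - z) * (v - z)) < 0"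
    using assms(3) by (simp add: mult_ac)
  then have "(u - z) * (v - z) < 0"
    by (simp add: mult_less_0_iff)
  then have z: "z \<in> {u<..<v}"
    using assms(2) by (auto simp: mult_less_0_iff)
  moreover have "f z = 0"
    using f z \<open>\<alpha> \<noteq> 0\<close> by (simp add: z_def)
  moreover have "y = z" if "y \<in> {u..v}" "f y = 0" for y
    using affine_on_two_zeros[OF assms(1), of y z] assms(2,3) that z \<open>f z = 0\<close> by force
  ultimately show ?thesis
    by blast
qed

lemma piecewise_linear_nonneg_iff_affine_on:
  "piecewise_linear_nonneg f \<longleftrightarrow>
    (\<exists>B. finite B \<and> (\<forall>u v. 0 \<le> u \<and> u < v \<and> B \<inter> {u<..<v} = {} \<longrightarrow> affine_on {u..v} f))"
  by (simp add: piecewise_linear_nonneg_def affine_on_def)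

lemma piecewise_linear_nonnegI:
  assumes "finite B" "\<And>u v. 0 \<le> u \<Longrightarrow> u < v \<Longrightarrow> B \<inter> {u<..<v} = {} \<Longrightarrow> affine_on {u..v} f"
  shows "piecewise_linear_nonneg f"
  unfolding piecewise_linear_nonneg_iff_affine_on using assms by (intro exI[of _ B]) simp

lemma piecewise_linear_nonnegE:
  assumes "piecewise_linear_nonneg f"
  obtains B where "finite B"
    "\<And>u v. 0 \<le> u \<Longrightarrow> u < v \<Longrightarrow> B \<inter> {u<..<v} = {} \<Longrightarrow> affine_on {u..v} f"
  using assms unfolding piecewise_linear_nonneg_iff_affine_on by auto

lemma piecewise_linear_nonneg_cong:
  assumes "piecewise_linear_nonneg f" "\<And>x. 0 \<le> x \<Longrightarrow> f x = g x"
  shows "piecewise_linear_nonneg g"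
proof -
  obtain B where B: "finite B"
    "\<And>u v. 0 \<le> u \<Longrightarrow> u < v \<Longrightarrow> B \<inter> {u<..<v} = {} \<Longrightarrow> affine_on {u..v} f"
    using assms(1) by (rule piecewise_linear_nonnegE) (rule that)
  show ?thesis
  proof (rule piecewise_linear_nonnegI[OF B(1)])
    fix u v assume "0 \<le> u" "u < v" "B \<inter> {u<..<v} = {}"
    then show "affine_on {u..v} g"
      by (rule affine_on_eq[OF B(2)]) (use \<open>0 \<le> u\<close> assms(2) in auto)
  qed
qed

lemma piecewise_linear_nonneg_linear: "piecewise_linear_nonneg (\<lambda>x. \<alpha> * x)"
  by (rule piecewise_linear_nonnegI[of "{}"]) (simp_all add: affine_on_linear)

lemma piecewise_linear_nonneg_const: "piecewise_linear_nonneg (\<lambda>x. c)"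
  by (rule piecewise_linear_nonnegI[of "{}"]) (simp_all add: affine_on_const)

lemma piecewise_linear_nonneg_add:
  assumes "piecewise_linear_nonneg f" "piecewise_linear_nonneg g"
  shows "piecewise_linear_nonneg (\<lambda>x. f x + g x)"
proof -
  obtain B where B: "finite B"
    "\<And>u v. 0 \<le> u \<Longrightarrow> u < v \<Longrightarrow> B \<inter> {u<..<v} = {} \<Longrightarrow> affine_on {u..v} f"
    using assms(1) by (rule piecewise_linear_nonnegE) (rule that)
  obtain C where C: "finite C"
    "\<And>u v. 0 \<le> u \<Longrightarrow> u < v \<Longrightarrow> C \<inter> {u<..<v} = {} \<Longrightarrow> affine_on {u..v} g"
    using assms(2) by (rule piecewise_linear_nonnegE) (rule that)
  show ?thesis
  proof (rule piecewise_linear_nonnegI[of "B \<union> C"])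
    fix u v assume "0 \<le> u" "u < v" "(B \<union> C) \<inter> {u<..<v} = {}"
    then show "affine_on {u..v} (\<lambda>x. f x + g x)"
      using B(2) C(2) by (intro affine_on_add) (auto simp: Int_Un_distrib2)
  qed (use B C in simp)
qed

lemma piecewise_linear_nonneg_cmult:
  assumes "piecewise_linear_nonneg f"
  shows "piecewise_linear_nonneg (\<lambda>x. c * f x)"
proof -
  obtain B where B: "finite B"
    "\<And>u v. 0 \<le> u \<Longrightarrow> u < v \<Longrightarrow> B \<inter> {u<..<v} = {} \<Longrightarrow> affine_on {u..v} f"
    using assms by (rule piecewise_linear_nonnegE) (rule that)
  show ?thesis
    by (rule piecewise_linear_nonnegI[of B]) (simp_all add: B affine_on_cmult)
qed

lemma piecewise_linear_nonneg_diff: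
  assumes "piecewise_linear_nonneg f" "piecewise_linear_nonneg g"
  shows "piecewise_linear_nonneg (\<lambda>x. f x - g x)"
  using piecewise_linear_nonneg_add[OF assms(1) piecewise_linear_nonneg_cmult[OF assms(2), of "-1"]]
  by simp

lemma piecewise_linear_nonneg_sum:
  assumes "\<And>i. i \<in> I \<Longrightarrow> piecewise_linear_nonneg (f i)"
  shows "piecewise_linear_nonneg (\<lambda>x. \<Sum>i\<in>I. f i x)"
  using assms
  by (induction I rule: infinite_finite_induct)
    (auto intro: piecewise_linear_nonneg_add piecewise_linear_nonneg_const)

text \<open>Zeros of \<open>f\<close> near which \<open>f\<close> does not vanish identically: each gap between consecutive
  breakpoints contains at most one of them, since an affine function with two zeros vanishes.\<close>

lemma finite_frontier_zeros:
  assumes "finite B"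
    and affine: "\<And>u v. 0 \<le> u \<Longrightarrow> u < v \<Longrightarrow> B \<inter> {u<..<v} = {} \<Longrightarrow> affine_on {u..v} f"
  shows "finite {z. 0 < z \<and> f z = 0 \<and> (\<forall>e>0. \<exists>y. \<bar>y - z\<bar> < e \<and> f y \<noteq> 0)}" (is "finite ?Z")
proof -
  define B0 where "B0 = insert 0 {b\<in>B. 0 \<le> b}"
  define gap where "gap z = Max {b\<in>B0. b < z}" for z
  have "finite B0"
    using assms(1) by (simp add: B0_def)
  have gap: "gap z \<in> B0" "gap z < z" "\<And>b. b \<in> B0 \<Longrightarrow> b < z \<Longrightarrow> b \<le> gap z" if "0 < z" for z
  proof -
    have "finite {b\<in>B0. b < z}" "0 \<in> {b\<in>B0. b < z}"
      using \<open>finite B0\<close> that by (auto simp: B0_def)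
    then have "gap z \<in> {b\<in>B0. b < z}"
      unfolding gap_def by (intro Max_in) auto
    then show "gap z \<in> B0" "gap z < z"
      by simp_all
    show "\<And>b. b \<in> B0 \<Longrightarrow> b < z \<Longrightarrow> b \<le> gap z"
      unfolding gap_def using \<open>finite {b\<in>B0. b < z}\<close> by (simp add: Max_ge)
  qed
  have gap_neq: "gap z1 \<noteq> gap z2" if "z1 \<in> ?Z" "z2 \<in> ?Z" "z1 < z2" for z1 z2
  proof
    assume same_gap: "gap z1 = gap z2"
    define b where "b = gap z2"
    have "0 < z1" "0 < z2"
      using that by auto
    then have "0 \<le> b" "b < z1"
      using gap(1)[of z2] gap(2)[of z1] same_gap by (auto simp: b_def B0_def)
    have "B \<inter> {b<..<z2} = {}"
    proof (rule equals0I)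
      fix x assume "x \<in> B \<inter> {b<..<z2}"
      then have "x \<in> B0" "x < z2" "b < x"
        using \<open>0 \<le> b\<close> by (auto simp: B0_def)
      then show False
        using gap(3)[OF \<open>0 < z2\<close>, of x] by (simp add: b_def)
    qed
    then have "affine_on {b..z2} f"
      using affine \<open>0 \<le> b\<close> \<open>b < z1\<close> \<open>z1 < z2\<close> by simp
    moreover have "z1 \<in> {b..z2}" "z2 \<in> {b..z2}" "f z1 = 0" "f z2 = 0"
      using \<open>z1 \<in> ?Z\<close> \<open>z2 \<in> ?Z\<close> \<open>b < z1\<close> \<open>z1 < z2\<close> by auto
    ultimately have zero: "f y = 0" if "y \<in> {b..z2}" for y
      using affine_on_two_zeros \<open>z1 < z2\<close> that by (metis less_irrefl)
    have "\<forall>e>0. \<exists>y. \<bar>y - z1\<bar> < e \<and> f y \<noteq> 0"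
      using \<open>z1 \<in> ?Z\<close> by simp
    moreover have "0 < min (z1 - b) (z2 - z1)"
      using \<open>b < z1\<close> \<open>z1 < z2\<close> by simp
    ultimately obtain y where "\<bar>y - z1\<bar> < min (z1 - b) (z2 - z1)" "f y \<noteq> 0"
      by blast
    then show False
      using zero[of y] by (auto simp: abs_less_iff)
  qed
  have "inj_on gap ?Z"
  proof (rule inj_onI)
    fix z1 z2 assume "z1 \<in> ?Z" "z2 \<in> ?Z" "gap z1 = gap z2"
    then show "z1 = z2"
      using gap_neq[of z1 z2] gap_neq[of z2 z1] by (cases z1 z2 rule: linorder_cases) auto
  qed
  moreover have "gap ` ?Z \<subseteq> B0"
    using gap(1) by (simp add: image_subset_iff)
  then have "finite (gap ` ?Z)"
    using \<open>finite B0\<close> by (rule finite_subset)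
  ultimately show ?thesis
    by (rule finite_imageD[rotated])
qed

lemma piecewise_linear_nonneg_max_0:
  assumes "piecewise_linear_nonneg f"
  shows "piecewise_linear_nonneg (\<lambda>x. max (f x) 0)"
proof -
  obtain B where B: "finite B"
    "\<And>u v. 0 \<le> u \<Longrightarrow> u < v \<Longrightarrow> B \<inter> {u<..<v} = {} \<Longrightarrow> affine_on {u..v} f"
    using assms by (rule piecewise_linear_nonnegE) (rule that)
  define Z where "Z = {z. 0 < z \<and> f z = 0 \<and> (\<forall>e>0. \<exists>y. \<bar>y - z\<bar> < e \<and> f y \<noteq> 0)}"
  have "finite Z"
    unfolding Z_def by (rule finite_frontier_zeros[OF B])
  show ?thesis
  proof (rule piecewise_linear_nonnegI[of "B \<union> Z"])
    show "finite (B \<union> Z)"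
      using B(1) \<open>finite Z\<close> by simp
  next
    fix u v assume uv: "0 \<le> u" "u < v" "(B \<union> Z) \<inter> {u<..<v} = {}"
    then have affine: "affine_on {u..v} f"
      using B(2) by blast
    show "affine_on {u..v} (\<lambda>x. max (f x) 0)"
    proof (cases "f u * f v < 0")
      case True
      then obtain z where z: "z \<in> {u<..<v}" "f z = 0" "\<forall>y\<in>{u..v}. f y = 0 \<longrightarrow> y = z"
        using affine_on_sign_change[OF affine less_imp_le[OF uv(2)]] by blast
      have "z \<in> Z"
        unfolding Z_def
      proof (intro CollectI conjI allI impI)
        fix e :: real assume "0 < e"
        define d where "d = min e (v - z)"
        have "0 < d" "d \<le> e" "d \<le> v - z"
          using z(1) \<open>0 < e\<close> by (auto simp: d_def)
        then have "z + d / 2 \<in> {u..v}" "z + d / 2 \<noteq> z" "\<bar>z + d / 2 - z\<bar> < e"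
          using z(1) by auto
        then show "\<exists>y. \<bar>y - z\<bar> < e \<and> f y \<noteq> 0"
          using z(3) by blast
      qed (use z uv(1) in auto)
      then show ?thesis
        using z(1) uv(3) by blast
    next
      case False
      then consider "0 \<le> f u" "0 \<le> f v" | "f u \<le> 0" "f v \<le> 0"
        by (cases "0 \<le> f u"; cases "0 \<le> f v") (auto simp: mult_less_0_iff)
      then show ?thesis
      proof cases
        case 1
        then have eq: "max (f x) 0 = f x" if "x \<in> {u..v}" for x
          using affine_on_between[OF affine that] by auto
        show ?thesis
          by (rule affine_on_eq[OF affine]) (simp add: eq)
      next
        case 2
        then have eq: "max (f x) 0 = 0" if "x \<in> {u..v}" for x
          using affine_on_between[OF affine that] by auto
        show ?thesis
          by (rule affine_on_eq[OF affine_on_const[of _ 0]]) (simp add: eq)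
      qed
    qed
  qed
qed

lemma piecewise_linear_nonneg_max:
  assumes "piecewise_linear_nonneg f" "piecewise_linear_nonneg g"
  shows "piecewise_linear_nonneg (\<lambda>x. max (f x) (g x))"
proof -
  have "(\<lambda>x. max (f x) (g x)) = (\<lambda>x. g x + max (f x - g x) 0)"
    by (auto simp: fun_eq_iff max_def)
  then show ?thesis
    using assms by (metis piecewise_linear_nonneg_add piecewise_linear_nonneg_diff
        piecewise_linear_nonneg_max_0)
qed

lemma piecewise_linear_nonneg_min:
  assumes "piecewise_linear_nonneg f" "piecewise_linear_nonneg g"
  shows "piecewise_linear_nonneg (\<lambda>x. min (f x) (g x))"
proof -
  have "(\<lambda>x. min (f x) (g x)) = (\<lambda>x. f x - max (f x - g x) 0)"
    by (auto simp: fun_eq_iff min_def max_def)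
  then show ?thesis
    using assms by (metis piecewise_linear_nonneg_diff piecewise_linear_nonneg_max_0)
qed

lemma piecewise_linear_nonneg_greedy_soc:
  assumes "piecewise_linear_nonneg Sb" "piecewise_linear_nonneg xb"
  shows "piecewise_linear_nonneg (\<lambda>\<theta>. greedy_soc p S0 (Sb \<theta>) (xb \<theta>) t)"
proof (induction t)
  case 0
  then show ?case by (simp add: piecewise_linear_nonneg_const)
next
  case (Suc t)
  then show ?case
    by (simp only: greedy_soc.simps)
      (intro piecewise_linear_nonneg_min[OF assms(1)] piecewise_linear_nonneg_max
        piecewise_linear_nonneg_const piecewise_linear_nonneg_diff piecewise_linear_nonneg_add
        piecewise_linear_nonneg_min[OF assms(2)])
qed

lemma piecewise_linear_nonneg_P1_value:
  assumes "piecewise_linear_nonneg Sb" "piecewise_linear_nonneg xb" "0 \<le> S0"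
    and "\<And>\<theta>. 0 \<le> \<theta> \<Longrightarrow> S0 \<le> Sb \<theta>" "\<And>\<theta>. 0 \<le> \<theta> \<Longrightarrow> 0 \<le> xb \<theta>"
  shows "piecewise_linear_nonneg (\<lambda>\<theta>. P1_value T p S0 (Sb \<theta>) (xb \<theta>))"
proof (rule piecewise_linear_nonneg_cong)
  show "piecewise_linear_nonneg (\<lambda>\<theta>. P1_objective T (greedy_soc p S0 (Sb \<theta>) (xb \<theta>)))"
    unfolding P1_objective_def
    by (intro piecewise_linear_nonneg_sum piecewise_linear_nonneg_min piecewise_linear_nonneg_const
        piecewise_linear_nonneg_diff piecewise_linear_nonneg_greedy_soc assms(1,2))
next
  fix \<theta> :: real assume "0 \<le> \<theta>"
  then show "P1_objective T (greedy_soc p S0 (Sb \<theta>) (xb \<theta>)) = P1_value T p S0 (Sb \<theta>) (xb \<theta>)"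
    using P1_value_eq_greedy_soc assms(3-5) by simp
qed

section \<open>Continuity and one-sided derivatives\<close>

lemma piecewise_linear_nonneg_right_piece:
  assumes "piecewise_linear_nonneg f" "0 \<le> \<theta>"
  obtains v where "\<theta> < v" "affine_on {\<theta>..v} f"
proof -
  obtain B where B: "finite B"
    "\<And>u v. 0 \<le> u \<Longrightarrow> u < v \<Longrightarrow> B \<inter> {u<..<v} = {} \<Longrightarrow> affine_on {u..v} f"
    using assms(1) by (rule piecewise_linear_nonnegE) (rule that)
  define v where "v = Min (insert (\<theta> + 1) {b\<in>B. \<theta> < b})"
  have "finite (insert (\<theta> + 1) {b\<in>B. \<theta> < b})"
    using B(1) by simp
  then have "\<theta> < v" "\<And>b. b \<in> B \<Longrightarrow> \<theta> < b \<Longrightarrow> v \<le> b"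
    unfolding v_def using Min_in[of "insert (\<theta> + 1) {b\<in>B. \<theta> < b}"] by auto
  then have "B \<inter> {\<theta><..<v} = {}"
    by fastforce
  then show thesis
    using that B(2) assms(2) \<open>\<theta> < v\<close> by blast
qed

lemma piecewise_linear_nonneg_left_piece:
  assumes "piecewise_linear_nonneg f" "0 < \<theta>"
  obtains u where "0 \<le> u" "u < \<theta>" "affine_on {u..\<theta>} f"
proof -
  obtain B where B: "finite B"
    "\<And>u v. 0 \<le> u \<Longrightarrow> u < v \<Longrightarrow> B \<inter> {u<..<v} = {} \<Longrightarrow> affine_on {u..v} f"
    using assms(1) by (rule piecewise_linear_nonnegE) (rule that)
  define u where "u = Max (insert 0 {b\<in>B. b < \<theta>})"
  have "finite (insert 0 {b\<in>B. b < \<theta>})"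
    using B(1) by simp
  then have "0 \<le> u" "u < \<theta>" "\<And>b. b \<in> B \<Longrightarrow> b < \<theta> \<Longrightarrow> b \<le> u"
    unfolding u_def using Max_in[of "insert 0 {b\<in>B. b < \<theta>}"] assms(2) by auto
  then have "B \<inter> {u<..<\<theta>} = {}"
    by fastforce
  then show thesis
    using that B(2) \<open>0 \<le> u\<close> \<open>u < \<theta>\<close> by blast
qed

lemma affine_on_one_sided_derivatives:
  assumes "affine_on {u..v} f" "u < v"
  obtains \<alpha> where "(f has_real_derivative \<alpha>) (at u within {u..})"
    "(f has_real_derivative \<alpha>) (at v within {..v})" "f v - f u = \<alpha> * (v - u)"
proof -
  obtain \<alpha> \<beta> where f: "\<forall>x\<in>{u..v}. f x = \<alpha> * x + \<beta>"
    using assms(1) by (auto simp: affine_on_def)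
  have line: "((\<lambda>x. \<alpha> * x + \<beta>) has_real_derivative \<alpha>) (at x within S)" for x S
    by (auto intro!: derivative_eq_intros)
  have "(f has_real_derivative \<alpha>) (at u within {u..})"
    by (rule has_field_derivative_transform_within[OF line, where d = "v - u"])
      (use assms(2) f in \<open>auto simp: dist_real_def\<close>)
  moreover have "(f has_real_derivative \<alpha>) (at v within {..v})"
    by (rule has_field_derivative_transform_within[OF line, where d = "v - u"])
      (use assms(2) f in \<open>auto simp: dist_real_def\<close>)
  moreover have "f v - f u = \<alpha> * (v - u)"
    using f assms(2) by (simp add: algebra_simps)
  ultimately show thesis
    using that by blast
qed

lemma piecewise_linear_nonneg_right_derivative:
  assumes "piecewise_linear_nonneg f" "0 \<le> \<theta>"
  obtains \<alpha> v where "\<theta> < v" "(f has_real_derivative \<alpha>) (at \<theta> within {\<theta>..})"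
    "f v - f \<theta> = \<alpha> * (v - \<theta>)"
  using piecewise_linear_nonneg_right_piece[OF assms] affine_on_one_sided_derivatives by metis

lemma piecewise_linear_nonneg_left_derivative:
  assumes "piecewise_linear_nonneg f" "0 < \<theta>"
  obtains \<alpha> u where "0 \<le> u" "u < \<theta>" "(f has_real_derivative \<alpha>) (at \<theta> within {..\<theta>})"
    "f \<theta> - f u = \<alpha> * (\<theta> - u)"
  using piecewise_linear_nonneg_left_piece[OF assms] affine_on_one_sided_derivatives by metis

lemma piecewise_linear_nonneg_continuous_on:
  assumes "piecewise_linear_nonneg f"
  shows "continuous_on {0..} f"
  unfolding continuous_on_eq_continuous_within
proof
  fix \<theta> :: real assume "\<theta> \<in> {0..}"
  then have "0 \<le> \<theta>"
    by simp
  then obtain \<alpha> v where "(f has_real_derivative \<alpha>) (at \<theta> within {\<theta>..})"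
    using piecewise_linear_nonneg_right_derivative[OF assms] by blast
  then have right: "continuous (at \<theta> within {\<theta>..}) f"
    by (rule DERIV_continuous)
  show "continuous (at \<theta> within {0..}) f"
  proof (cases "\<theta> = 0")
    case True
    then show ?thesis
      using right by simp
  next
    case False
    then have "0 < \<theta>"
      using \<open>0 \<le> \<theta>\<close> by simp
    then obtain \<alpha> u where "(f has_real_derivative \<alpha>) (at \<theta> within {..\<theta>})"
      using piecewise_linear_nonneg_left_derivative[OF assms] by blast
    then have left: "continuous (at \<theta> within {..\<theta>}) f"
      by (rule DERIV_continuous)
    have "{..\<theta>} \<union> {\<theta>..} = UNIV"
      by auto
    with left right have "continuous (at \<theta>) f"
      unfolding continuous_within by (intro Lim_Un_univ)
    then show ?thesis
      by (rule continuous_at_imp_continuous_at_within)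
  qed
qed

lemma antimono_on_right_derivative_nonpos:
  assumes "piecewise_linear_nonneg f" "antimono_on {0..} f" "0 \<le> \<theta>"
  shows "\<exists>D. D \<le> 0 \<and> (f has_real_derivative D) (at \<theta> within {\<theta>..})"
proof -
  obtain \<alpha> v where "\<theta> < v" "(f has_real_derivative \<alpha>) (at \<theta> within {\<theta>..})"
    "f v - f \<theta> = \<alpha> * (v - \<theta>)"
    using piecewise_linear_nonneg_right_derivative[OF assms(1,3)] by blast
  moreover have "f v \<le> f \<theta>"
    using assms(2,3) \<open>\<theta> < v\<close> by (auto simp: monotone_on_def)
  ultimately have "\<alpha> * (v - \<theta>) \<le> 0"
    by simp
  then have "\<alpha> \<le> 0"
    using \<open>\<theta> < v\<close> by (simp add: mult_le_0_iff)
  then show ?thesis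
    using \<open>(f has_real_derivative \<alpha>) (at \<theta> within {\<theta>..})\<close> by blast
qed

lemma antimono_on_left_derivative_nonpos:
  assumes "piecewise_linear_nonneg f" "antimono_on {0..} f" "0 < \<theta>"
  shows "\<exists>D. D \<le> 0 \<and> (f has_real_derivative D) (at \<theta> within {..\<theta>})"
proof -
  obtain \<alpha> u where "0 \<le> u" "u < \<theta>" "(f has_real_derivative \<alpha>) (at \<theta> within {..\<theta>})"
    "f \<theta> - f u = \<alpha> * (\<theta> - u)"
    using piecewise_linear_nonneg_left_derivative[OF assms(1,3)] by blast
  moreover have "f \<theta> \<le> f u"
    using assms(2) \<open>0 \<le> u\<close> \<open>u < \<theta>\<close> by (auto simp: monotone_on_def)
  ultimately have "\<alpha> * (\<theta> - u) \<le> 0"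
    by simp
  then have "\<alpha> \<le> 0"
    using \<open>u < \<theta>\<close> by (simp add: mult_le_0_iff)
  then show ?thesis
    using \<open>(f has_real_derivative \<alpha>) (at \<theta> within {..\<theta>})\<close> by blast
qed

lemma antimono_on_derivative_nonpos:
  fixes f :: "real \<Rightarrow> real"
  assumes "antimono_on {0..} f" "0 < \<theta>" "(f has_real_derivative D) (at \<theta>)"
  shows "D \<le> 0"
proof -
  have "mono_on {0..} (\<lambda>x. - f x)"
    using assms(1) by (auto simp: monotone_on_def)
  moreover have "((\<lambda>x. - f x) has_real_derivative - D) (at \<theta>)"
    using assms(3) by (rule DERIV_minus)
  ultimately have "- D \<ge> 0"
    by (rule mono_on_imp_deriv_nonneg) (use assms(2) in simp)
  then show ?thesis
    by simp
qed

theorem theorem1: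
  fixes T N :: nat and P :: "nat \<Rightarrow> nat \<Rightarrow> real" and S0 :: real
    and Sbar0 xbar0 a b :: real
  assumes hT: "T \<ge> 1" and hN: "N \<ge> 1" and hS0: "S0 \<ge> 0"
    and hSbar0: "Sbar0 \<ge> S0" and hxbar0: "xbar0 \<ge> 0"
    and ha: "a \<ge> 0" and hb: "b \<ge> 0" and hab: "(a, b) \<noteq> (0, 0)"
  shows
    "(\<forall>Sbar xbar. Sbar \<ge> S0 \<longrightarrow> xbar \<ge> 0 \<longrightarrow>
        (\<forall>k\<in>{1..N}. \<exists>S. P1_feasible T (P k) S0 Sbar xbar S))
     \<and> (let f = (\<lambda>\<theta>. EUE T N P S0 (Sbar0 + a * \<theta>) (xbar0 + b * \<theta>)) in
          continuous_on {0..} f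
        \<and> piecewise_linear_nonneg f
        \<and> (\<forall>\<theta>1 \<theta>2. 0 \<le> \<theta>1 \<longrightarrow> \<theta>1 \<le> \<theta>2 \<longrightarrow> f \<theta>2 \<le> f \<theta>1)
        \<and> (\<forall>\<theta> D. 0 < \<theta> \<longrightarrow> (f has_real_derivative D) (at \<theta>) \<longrightarrow> - D \<ge> 0)
        \<and> (\<forall>\<theta>. 0 \<le> \<theta> \<longrightarrow>
             (\<exists>D. D \<le> 0 \<and> (f has_real_derivative D) (at \<theta> within {\<theta>..})))
        \<and> (\<forall>\<theta>. 0 < \<theta> \<longrightarrow>
             (\<exists>D. D \<le> 0 \<and> (f has_real_derivative D) (at \<theta> within {..\<theta>}))))"
proof -
  have feasible: "\<forall>Sbar xbar. Sbar \<ge> S0 \<longrightarrow> xbar \<ge> 0 \<longrightarrow>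
      (\<forall>k\<in>{1..N}. \<exists>S. P1_feasible T (P k) S0 Sbar xbar S)"
    using greedy_soc_feasible[OF hS0] by blast
  define f where "f \<theta> = EUE T N P S0 (Sbar0 + a * \<theta>) (xbar0 + b * \<theta>)" for \<theta>
  have ray: "S0 \<le> Sbar0 + a * \<theta>" "0 \<le> xbar0 + b * \<theta>" if "0 \<le> \<theta>" for \<theta>
    using that ha hb hSbar0 hxbar0 by (auto intro: add_increasing2)
  have Sbar: "piecewise_linear_nonneg (\<lambda>\<theta>. Sbar0 + a * \<theta>)"
    and xbar: "piecewise_linear_nonneg (\<lambda>\<theta>. xbar0 + b * \<theta>)"
    by (intro piecewise_linear_nonneg_add piecewise_linear_nonneg_const
        piecewise_linear_nonneg_linear)+
  have piecewise: "piecewise_linear_nonneg f"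
    unfolding f_def EUE_def
    by (intro piecewise_linear_nonneg_cmult piecewise_linear_nonneg_sum piecewise_linear_nonneg_add
        piecewise_linear_nonneg_const piecewise_linear_nonneg_P1_value[OF Sbar xbar hS0 ray])
  have antimono: "antimono_on {0..} f"
  proof (rule monotone_onI)
    fix \<theta>1 \<theta>2 :: real assume "\<theta>1 \<in> {0..}" "\<theta>1 \<le> \<theta>2"
    then show "f \<theta>2 \<le> f \<theta>1"
      unfolding f_def using ray[of \<theta>1] ha hb
      by (intro EUE_antimono hS0) (auto intro: mult_left_mono)
  qed
  show ?thesis
    unfolding Let_def f_def[symmetric]
    using feasible piecewise_linear_nonneg_continuous_on[OF piecewise] piecewise
      antimono antimono_on_derivative_nonpos[OF antimono]
      antimono_on_right_derivative_nonpos[OF piecewise antimono]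
      antimono_on_left_derivative_nonpos[OF piecewise antimono]
    by (auto simp: monotone_on_def)
qed

end
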